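(* Let $n\geq1$ and $\mathcal{P},\mathcal{Q}\in eNNC_{2n}$. Then $\langle\mathcal{P}\rangle=\langle\mathcal{Q}\rangle$ as subcategories of $\overline{\mathcal{C}}_n$ if and only if $\mathcal{P}=\mathcal{Q}$ up to relabelling of blocks.
   Context: Let $k$ be a field, $S$ the unit circle with anticlockwise orientation. Fix a discrete infinite subset $\mathscr{M}\subset S$ such that every limit point of $\mathscr{M}$ is a limit of both an increasing and a decreasing sequence of $\mathscr{M}$ in the cyclic order, with exactly $n$ such limit points (accumulation points) $a_1,\dots,a_n$ in cyclic order (indices mod $n$, $a_0=a_n$); put $\overline{\mathscr{M}}=\mathscr{M}\cup\{a_1,\dots,a_n\}$, and let $(a_i,a_{i+1})$ denote the points of $\mathscr{M}$ strictly between $a_i$ and $a_{i+1}$. Each $x\in\mathscr{M}$ has a cyclic predecessor $x^-$ and successor $x^+$ in $\mathscr{M}$; for accumulation points $a^\pm=a$. An arc of $\overline{\mathscr{M}}$ is an unordered pair $\{x_1,x_2\}\subset\overline{\mathscr{M}}$ with $x_2\ne x_1,x_1^-,x_1^+$; arcs cross if their endpoints strictly alternate cyclically; $\{x_1,x_2\}[1]=\{x_1^-,x_2^-\}$. The Paquette–Yıldırım category $\overline{\mathcal{C}}_n$ is a Hom-finite, $k$-linear, Krull–Schmidt triangulated category with suspension $[1]$ whose indecomposables $X$ correspond bijectively to arcs $\ell_X$ of $\overline{\mathscr{M}}$, with $\ell_{X[1]}=\ell_X[1]$, and $\mathrm{Hom}(X,Y)\cong k$ if $\ell_X$ and $\ell_Y[-1]$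 cross, or both have an endpoint at a common accumulation point with $\ell_Y[-1]$ an anticlockwise rotation of $\ell_X$ about it; $0$ otherwise. A non-exhaustive non-crossing partition of $[m]=\{1,\dots,m\}$ is a collection of pairwise disjoint nonempty subsets (blocks) of $[m]$, not necessarily covering $[m]$, such that whenever $i<k<j<l$ with $i,j$ in a block $B$ and $k,l$ in a block $B'$, $B=B'$. $eNNC_{2n}$ is the set of such partitions of $[2n]$ containing no block $\{i\}$ with $i$ even. For $\mathcal{P}\in eNNC_{2n}$, $\langle\mathcal{P}\rangle\subseteq\overline{\mathcal{C}}_n$ is the additive closure (closed under sums and summands) of indecomposables $X$ with $\ell_X=\{x,y\}$ such that for some block $B\in\mathcal{P}$, $x,y\in\bigcup_{p\in B,\,p\text{ odd}}(a_{(p-1)/2},a_{(p+1)/2})\cup\bigcup_{p\in B,\,p\text{ even}}\{a_{p/2}\}$. *)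

theory Defs
  imports Main "HOL-Library.Multiset"
begin

text \<open>Combinatorial model of \<open>\<overline>M\<close> with n accumulation points.
  Accumulation point a_i is \<open>Acc i\<close> (1 \<le> i \<le> n); the points of M strictly
  between a_(i-1) and a_i (with a_0 = a_n) are \<open>Mid i z\<close>, z an integer,
  ordered anticlockwise by z (each such interval is order-isomorphic to the integers,
  since every accumulation point is a two-sided limit of M and M is discrete).\<close>

datatype mpt = Acc nat | Mid nat int

definition Mbar :: "nat \<Rightarrow> mpt set" where
  "Mbar n = {Acc i | i. 1 \<le> i \<and> i \<le> n} \<union> {Mid i z | i z. 1 \<le> i \<and> i \<le> n}"

fun msucc :: "mpt \<Rightarrow> mpt" where
  "msucc (Acc i) = Acc i"
| "msucc (Mid i z) = Mid i (z + 1)"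

fun mpred :: "mpt \<Rightarrow> mpt" where
  "mpred (Acc i) = Acc i"
| "mpred (Mid i z) = Mid i (z - 1)"

definition is_arc :: "nat \<Rightarrow> mpt set \<Rightarrow> bool" where
  "is_arc n A \<longleftrightarrow> (\<exists>x y. A = {x, y} \<and> x \<in> Mbar n \<and> y \<in> Mbar n
      \<and> y \<noteq> x \<and> y \<noteq> mpred x \<and> y \<noteq> msucc x)"

definition NNC :: "nat \<Rightarrow> nat set set \<Rightarrow> bool" where
  "NNC m P \<longleftrightarrow>
     (\<forall>B\<in>P. B \<noteq> {} \<and> B \<subseteq> {1..m}) \<and>
     (\<forall>B\<in>P. \<forall>B'\<in>P. B \<noteq> B' \<longrightarrow> B \<inter> B' = {}) \<and>
     (\<forall>B\<in>P. \<forall>B'\<in>P. \<forall>i j k l. i < k \<and> k < j \<and> j < l \<and> i \<in> B \<and> j \<in> B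
         \<and> k \<in> B' \<and> l \<in> B' \<longrightarrow> B = B')"

definition eNNC :: "nat \<Rightarrow> nat set set set" where
  "eNNC m = {P. NNC m P \<and> (\<forall>i. even i \<longrightarrow> {i} \<notin> P)}"

text \<open>the region of \<open>\<overline>M\<close> attached to a block: odd p gives the interval
  (a_((p-1)/2), a_((p+1)/2)) = points Mid ((p+1)/2) z; even p gives a_(p/2)\<close>
definition region :: "nat set \<Rightarrow> mpt set" where
  "region B = {Mid ((p + 1) div 2) z | p z. p \<in> B \<and> odd p}
            \<union> {Acc (p div 2) | p. p \<in> B \<and> even p}"

text \<open>arcs of the indecomposables of \<open>\<langle>P\<rangle>\<close>\<close>
definition gen_arcs :: "nat \<Rightarrow> nat set set \<Rightarrow> mpt set set" where
  "gen_arcs n P = {A. is_arc n A \<and> (\<exists>B\<in>P. A \<subseteq> region B)}"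

text \<open>Objects of the Krull-Schmidt category up to isomorphism are finite multisets of
  indecomposables, i.e. of arcs. The additive closure \<open>\<langle>P\<rangle>\<close> (closed under
  sums and summands) consists of the objects all of whose indecomposable summands
  have arcs in gen_arcs.\<close>
definition subcat :: "nat \<Rightarrow> nat set set \<Rightarrow> mpt set multiset set" where
  "subcat n P = {X. \<forall>A\<in>#X. A \<in> gen_arcs n P}"

end

theory Submission
  imports Defs
begin

text \<open>The subcategory determines its set of generating arcs. Two indices p, q of [2n]
  lie in a common block of \<open>\<P>\<close> exactly when some generating arc has one endpoint in
  the region of p and the other in the region of q. For p = q such an arc exists inside
  the interval when p is odd, and joins a_(p/2) to the region of another index of its
  block when p is even, because \<open>\<P>\<close> has no even singleton blocks. So the relation
  "in a common block", and with it the partition, is read off the subcategory.\<close>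

definition cell :: "nat \<Rightarrow> mpt set" where
  "cell p = region {p}"

definition linked :: "mpt set set \<Rightarrow> nat \<Rightarrow> nat \<Rightarrow> bool" where
  "linked G p q \<longleftrightarrow> (\<exists>A\<in>G. A \<inter> cell p \<noteq> {} \<and> A \<inter> cell q \<noteq> {})"

definition same_block :: "'a set set \<Rightarrow> 'a \<Rightarrow> 'a \<Rightarrow> bool" where
  "same_block P p q \<longleftrightarrow> (\<exists>B\<in>P. p \<in> B \<and> q \<in> B)"

lemma cell_eq:
  "cell p = (if odd p then range (Mid ((p + 1) div 2)) else {Acc (p div 2)})"
  unfolding cell_def region_def by auto

lemma cell_nonempty: "cell p \<noteq> {}"
  unfolding cell_eq by auto

lemma cell_unique:
  assumes "x \<in> cell p" and "x \<in> cell q"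
  shows "p = q"
  using assms unfolding cell_eq by (auto split: if_splits elim!: oddE evenE)

lemma region_eq_UN_cell: "region B = (\<Union>p\<in>B. cell p)"
  unfolding cell_def region_def by auto

lemma mem_region_iff:
  assumes "x \<in> cell p"
  shows "x \<in> region B \<longleftrightarrow> p \<in> B"
  using assms cell_unique unfolding region_eq_UN_cell by blast

lemma cell_closed_succ_pred:
  assumes "x \<in> cell p"
  shows "msucc x \<in> cell p" and "mpred x \<in> cell p"
  using assms unfolding cell_eq by (cases x; auto split: if_splits)+

lemma cell_subset_Mbar:
  assumes "p \<in> {1..2 * n}"
  shows "cell p \<subseteq> Mbar n"
  using assms unfolding cell_eq Mbar_def by (auto split: if_splits; presburger)

lemma is_arc_across_cells:
  assumes "x \<in> cell p" and "y \<in> cell q" and "p \<noteq> q"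
    and "p \<in> {1..2 * n}" and "q \<in> {1..2 * n}"
  shows "is_arc n {x, y}"
proof -
  have "y \<noteq> x" "y \<noteq> mpred x" "y \<noteq> msucc x"
    using assms(1-3) cell_unique cell_closed_succ_pred by metis+
  with assms cell_subset_Mbar show ?thesis
    unfolding is_arc_def by blast
qed

lemma is_arc_inside_odd_cell:
  assumes "odd p" and "p \<in> {1..2 * n}"
  shows "is_arc n {Mid ((p + 1) div 2) 0, Mid ((p + 1) div 2) 2}"
proof -
  have "Mid ((p + 1) div 2) z \<in> cell p" for z
    using assms(1) unfolding cell_eq by simp
  with assms(2) cell_subset_Mbar have Mid_in_Mbar: "Mid ((p + 1) div 2) z \<in> Mbar n" for z
    by blast
  show ?thesis
    unfolding is_arc_def
    by (rule exI[of _ "Mid ((p + 1) div 2) 0"], rule exI[of _ "Mid ((p + 1) div 2) 2"])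
      (use Mid_in_Mbar[of 0] Mid_in_Mbar[of 2] in simp)
qed

lemma eNNC_D:
  assumes "P \<in> eNNC m"
  shows "{} \<notin> P"
    and "\<And>B. B \<in> P \<Longrightarrow> B \<subseteq> {1..m}"
    and "\<And>B B' x. B \<in> P \<Longrightarrow> B' \<in> P \<Longrightarrow> x \<in> B \<Longrightarrow> x \<in> B' \<Longrightarrow> B = B'"
    and "\<And>i. even i \<Longrightarrow> {i} \<notin> P"
proof -
  have blocks: "\<forall>B\<in>P. B \<noteq> {} \<and> B \<subseteq> {1..m}"
    and disj: "\<forall>B\<in>P. \<forall>B'\<in>P. B \<noteq> B' \<longrightarrow> B \<inter> B' = {}"
    and even: "\<forall>i. even i \<longrightarrow> {i} \<notin> P"
    using assms by (simp_all add: eNNC_def NNC_def)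
  show "{} \<notin> P" and "\<And>B. B \<in> P \<Longrightarrow> B \<subseteq> {1..m}"
    using blocks by blast+
  show "\<And>B B' x. B \<in> P \<Longrightarrow> B' \<in> P \<Longrightarrow> x \<in> B \<Longrightarrow> x \<in> B' \<Longrightarrow> B = B'"
    using disj by blast
  show "\<And>i. even i \<Longrightarrow> {i} \<notin> P"
    using even by blast
qed

definition classes :: "('a \<Rightarrow> 'a \<Rightarrow> bool) \<Rightarrow> 'a set set" where
  "classes R = {{q. R p q} | p. R p p}"

lemma classes_same_block:
  assumes "{} \<notin> P"
    and disj: "\<And>B B' x. B \<in> P \<Longrightarrow> B' \<in> P \<Longrightarrow> x \<in> B \<Longrightarrow> x \<in> B' \<Longrightarrow> B = B'"
  shows "classes (same_block P) = P"
proof -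
  have class_eq: "{q. same_block P p q} = B" if "B \<in> P" "p \<in> B" for B p
    using that disj unfolding same_block_def by blast
  show ?thesis
  proof (intro equalityI subsetI)
    fix C assume "C \<in> classes (same_block P)"
    then show "C \<in> P"
      using class_eq unfolding classes_def same_block_def by blast
  next
    fix B assume "B \<in> P"
    moreover from this assms(1) obtain p where "p \<in> B"
      by (metis equals0I)
    ultimately show "B \<in> classes (same_block P)"
      using class_eq unfolding classes_def same_block_def by blast
  qed
qed

lemma gen_arcs_across_cells:
  assumes P: "P \<in> eNNC (2 * n)" and B: "B \<in> P" "p \<in> B" "q \<in> B" and "p \<noteq> q"
    and x: "x \<in> cell p" and y: "y \<in> cell q"
  shows "{x, y} \<in> gen_arcs n P"
proof -
  have "p \<in> {1..2 * n}" "q \<in> {1..2 * n}"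
    using eNNC_D(2)[OF P B(1)] B(2,3) by auto
  with x y \<open>p \<noteq> q\<close> have "is_arc n {x, y}"
    by (rule is_arc_across_cells)
  moreover have "{x, y} \<subseteq> region B"
    using mem_region_iff[OF x] mem_region_iff[OF y] B by simp
  ultimately show ?thesis
    unfolding gen_arcs_def using B(1) by blast
qed

lemma gen_arcs_inside_odd_cell:
  assumes P: "P \<in> eNNC (2 * n)" and B: "B \<in> P" "p \<in> B" and "odd p"
  shows "{Mid ((p + 1) div 2) 0, Mid ((p + 1) div 2) 2} \<in> gen_arcs n P"
proof -
  have "p \<in> {1..2 * n}"
    using eNNC_D(2)[OF P B(1)] B(2) by auto
  with \<open>odd p\<close> have "is_arc n {Mid ((p + 1) div 2) 0, Mid ((p + 1) div 2) 2}"
    by (rule is_arc_inside_odd_cell)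
  moreover have "Mid ((p + 1) div 2) z \<in> region B" for z
    using B(2) \<open>odd p\<close> mem_region_iff[of _ p B] unfolding cell_eq by simp
  ultimately show ?thesis
    unfolding gen_arcs_def using B(1) by blast
qed

lemma linkedI:
  assumes "A \<in> G" and "x \<in> A" "x \<in> cell p" and "y \<in> A" "y \<in> cell q"
  shows "linked G p q"
  using assms unfolding linked_def by blast

lemma linked_gen_arcs_iff:
  assumes P: "P \<in> eNNC (2 * n)"
  shows "linked (gen_arcs n P) p q \<longleftrightarrow> same_block P p q"
proof
  assume "linked (gen_arcs n P) p q"
  then obtain A B x y where "B \<in> P" "A \<subseteq> region B"
    and "x \<in> A" "x \<in> cell p" and "y \<in> A" "y \<in> cell q"
    unfolding linked_def gen_arcs_def by blast
  then have "B \<in> P" "p \<in> B" "q \<in> B"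
    using mem_region_iff by blast+
  then show "same_block P p q"
    unfolding same_block_def by blast
next
  assume "same_block P p q"
  then obtain B where B: "B \<in> P" "p \<in> B" "q \<in> B"
    unfolding same_block_def by blast
  obtain x y where x: "x \<in> cell p" and y: "y \<in> cell q"
    using cell_nonempty by blast
  consider "p \<noteq> q" | "p = q" "odd p" | "p = q" "even p"
    by blast
  then show "linked (gen_arcs n P) p q"
  proof cases
    case 1
    show ?thesis
      by (rule linkedI[OF gen_arcs_across_cells[OF P B 1 x y] _ x _ y]) simp_all
  next
    case 2
    then have "linked (gen_arcs n P) p p"
      using gen_arcs_inside_odd_cell[OF P B(1,2)] cell_eq
      by (intro linkedI[of _ _ "Mid ((p + 1) div 2) 0"]) auto
    with 2 show ?thesis
      by simp
  next
    case 3
    then have "B \<noteq> {p}"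
      using eNNC_D(4)[OF P] B(1) by blast
    then obtain r where "r \<in> B" "r \<noteq> p"
      using B(2) by blast
    moreover obtain z where "z \<in> cell r"
      using cell_nonempty by blast
    ultimately have "{x, z} \<in> gen_arcs n P"
      using gen_arcs_across_cells[OF P B(1,2)] x by blast
    then show ?thesis
      unfolding \<open>p = q\<close>[symmetric] by (rule linkedI[OF _ _ x _ x]) simp_all
  qed
qed

lemma subcat_eq_iff_gen_arcs_eq: "subcat n P = subcat n Q \<longleftrightarrow> gen_arcs n P = gen_arcs n Q"
proof
  assume "subcat n P = subcat n Q"
  then have "{#A#} \<in> subcat n P \<longleftrightarrow> {#A#} \<in> subcat n Q" for A
    by simp
  then show "gen_arcs n P = gen_arcs n Q"
    unfolding subcat_def by auto
qed (simp add: subcat_def)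

theorem lemma4p7:
  fixes n :: nat and P Q :: "nat set set"
  assumes "n \<ge> 1" and "P \<in> eNNC (2 * n)" and "Q \<in> eNNC (2 * n)"
  shows "subcat n P = subcat n Q \<longleftrightarrow> P = Q"
proof
  assume "subcat n P = subcat n Q"
  then have "gen_arcs n P = gen_arcs n Q"
    by (simp add: subcat_eq_iff_gen_arcs_eq)
  then have same: "same_block P = same_block Q"
    by (simp add: fun_eq_iff flip: linked_gen_arcs_iff[OF assms(2)] linked_gen_arcs_iff[OF assms(3)])
  have "P = classes (same_block P)"
    by (rule classes_same_block[OF eNNC_D(1,3)[OF assms(2)], symmetric])
  also have "\<dots> = classes (same_block Q)"
    by (simp only: same)
  also have "\<dots> = Q"
    by (rule classes_same_block[OF eNNC_D(1,3)[OF assms(3)]])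
  finally show "P = Q" .
qed simp

end
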